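(* Let $I$ and $J$ be compositions of $n$. The induced $HCl_n(0)$-supermodules $M_I$ and $M_J$ are isomorphic if and only if $HP(I)=HP(J)$.
   Context: For a composition $I=(i_1,\dots,i_r)$ of $n$, $\operatorname{Des}(I)=\{i_1,\dots,i_1+\cdots+i_{r-1}\}\subseteq[1,n-1]$, and the peak set is $HP(I)=\{a\in\operatorname{Des}(I):a\ne1,\ a-1\notin\operatorname{Des}(I)\}$. $HCl_n(0)$ is the complex superalgebra generated by even elements $T_1,\dots,T_{n-1}$ and odd elements $c_1,\dots,c_n$, with the relations $T_i^2=-T_i$, $T_iT_j=T_jT_i$ ($|i-j|>1$), $T_iT_{i+1}T_i=T_{i+1}T_iT_{i+1}$, $c_ic_j=-c_jc_i$ ($i\ne j$), $c_i^2=-1$, $T_ic_j=c_jT_i$ ($j\ne i,i+1$), $T_ic_i=c_{i+1}T_i$, and $(T_i+1)c_{i+1}=c_i(T_i+1)$. $H_n(0)$ is the subalgebra generated by the $T_i$. $S_I=\mathbb{C}\epsilon_I$ is the one-dimensional $H_n(0)$-module with $T_j\epsilon_I=-\epsilon_I$ if $j\in\operatorname{Des}(I)$ and $T_j\epsilon_I=0$ otherwise. $M_I=HCl_n(0)\otimes_{H_n(0)}S_I$ is a supermodule with basis $c_D\epsilon_I$ ($D\subseteq\{1,\dots,n\}$, where $c_D$ is the increasing product of the $c_d$, $d\in D$), with the parity of $c_D\epsilon_I$ equal to that of $|D|$. Isomorphism of supermodules means a grading-preserving $HCl_n(0)$-module isomorphism. *)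

theory Defs
  imports Complex_Main
begin

definition composition :: "nat \<Rightarrow> nat list \<Rightarrow> bool" where
  "composition n I \<longleftrightarrow> (\<forall>i\<in>set I. 0 < i) \<and> sum_list I = n"

definition Des :: "nat list \<Rightarrow> nat set" where
  "Des I = {sum_list (take k I) | k. 0 < k \<and> k < length I}"

definition HP :: "nat list \<Rightarrow> nat set" where
  "HP I = {a \<in> Des I. a \<noteq> 1 \<and> a - 1 \<notin> Des I}"

datatype gen = T nat | C nat

text \<open>Elements of the free associative algebra: finitely supported coefficient
  functions on words of generators.\<close>
type_synonym fa = "gen list \<Rightarrow> complex"

definition Tv :: "nat \<Rightarrow> nat \<Rightarrow> bool" where "Tv n i \<longleftrightarrow> 1 \<le> i \<and> i < n"
definition Cv :: "nat \<Rightarrow> nat \<Rightarrow> bool" where "Cv n j \<longleftrightarrow> 1 \<le> j \<and> j \<le> n"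

definition gens :: "nat \<Rightarrow> gen set" where
  "gens n = {T i | i. Tv n i} \<union> {C j | j. Cv n j}"

definition FA :: "nat \<Rightarrow> fa set" where
  "FA n = {p. finite {w. p w \<noteq> 0} \<and> (\<forall>w. p w \<noteq> 0 \<longrightarrow> set w \<subseteq> gens n)}"

definition fadd :: "fa \<Rightarrow> fa \<Rightarrow> fa" where "fadd p q = (\<lambda>w. p w + q w)"
definition fsub :: "fa \<Rightarrow> fa \<Rightarrow> fa" where "fsub p q = (\<lambda>w. p w - q w)"
definition fmul :: "fa \<Rightarrow> fa \<Rightarrow> fa" where
  "fmul p q = (\<lambda>w. \<Sum>k\<le>length w. p (take k w) * q (drop k w))"

definition comb :: "(complex \<times> gen list) list \<Rightarrow> fa" where
  "comb xs = (\<lambda>w. sum_list (map (\<lambda>(c,u). if u = w then c else 0) xs))"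

text \<open>Defining relations of HCl_n(0), each written as lhs - rhs.\<close>
definition rels :: "nat \<Rightarrow> fa set" where
  "rels n =
     {comb [(1,[T i,T i]),(1,[T i])] | i. Tv n i}
   \<union> {comb [(1,[T i,T j]),(-1,[T j,T i])] | i j. Tv n i \<and> Tv n j \<and> (i + 1 < j \<or> j + 1 < i)}
   \<union> {comb [(1,[T i,T (i+1),T i]),(-1,[T (i+1),T i,T (i+1)])] | i. Tv n i \<and> Tv n (i+1)}
   \<union> {comb [(1,[C i,C j]),(1,[C j,C i])] | i j. Cv n i \<and> Cv n j \<and> i \<noteq> j}
   \<union> {comb [(1,[C i,C i]),(1,[])] | i. Cv n i}
   \<union> {comb [(1,[T i,C j]),(-1,[C j,T i])] | i j. Tv n i \<and> Cv n j \<and> j \<noteq> i \<and> j \<noteq> i+1}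
   \<union> {comb [(1,[T i,C i]),(-1,[C (i+1),T i])] | i. Tv n i}
   \<union> {comb [(1,[T i,C (i+1)]),(1,[C (i+1)]),(-1,[C i,T i]),(-1,[C i])] | i. Tv n i}"

inductive_set Rideal :: "nat \<Rightarrow> fa set" for n where
  rel: "r \<in> rels n \<Longrightarrow> r \<in> Rideal n"
| zero: "(\<lambda>_. 0) \<in> Rideal n"
| add: "x \<in> Rideal n \<Longrightarrow> y \<in> Rideal n \<Longrightarrow> fadd x y \<in> Rideal n"
| lmul: "a \<in> FA n \<Longrightarrow> x \<in> Rideal n \<Longrightarrow> fmul a x \<in> Rideal n"
| rmul: "a \<in> FA n \<Longrightarrow> x \<in> Rideal n \<Longrightarrow> fmul x a \<in> Rideal n"

text \<open>M_I = HCl_n(0) \<otimes>_{H_n(0)} S_I = HCl_n(0) / HCl_n(0)\<cdot>{T_j - \<lambda>_j},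
  presented as FA n / NI n I, where NI n I is the left ideal generated by the
  two-sided relation ideal and the elements T_j - \<lambda>_j (\<lambda>_j = -1 if j \<in> Des I, else 0).\<close>
inductive_set NI :: "nat \<Rightarrow> nat list \<Rightarrow> fa set" for n I where
  ideal: "x \<in> Rideal n \<Longrightarrow> x \<in> NI n I"
| gen: "Tv n j \<Longrightarrow> comb [(1,[T j]),(if j \<in> Des I then 1 else 0,[])] \<in> NI n I"
| add: "x \<in> NI n I \<Longrightarrow> y \<in> NI n I \<Longrightarrow> fadd x y \<in> NI n I"
| lmul: "a \<in> FA n \<Longrightarrow> x \<in> NI n I \<Longrightarrow> fmul a x \<in> NI n I"

text \<open>Z/2-grading: parity = parity of the number of odd generators c_j.\<close>
definition nC :: "gen list \<Rightarrow> nat" where "nC w = length (filter (\<lambda>g. case g of C _ \<Rightarrow> True | T _ \<Rightarrow> False) w)"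
definition homog_even :: "fa \<Rightarrow> bool" where "homog_even p \<longleftrightarrow> (\<forall>w. p w \<noteq> 0 \<longrightarrow> even (nC w))"
definition homog_odd :: "fa \<Rightarrow> bool" where "homog_odd p \<longleftrightarrow> (\<forall>w. p w \<noteq> 0 \<longrightarrow> odd (nC w))"

text \<open>Isomorphism of supermodules M_I \<cong> M_J, expressed on representatives:
  phi induces a well-defined, additive, HCl_n(0)-equivariant (hence C-linear),
  bijective, parity-preserving map FA/NI n I \<rightarrow> FA/NI n J.\<close>
definition super_iso :: "nat \<Rightarrow> nat list \<Rightarrow> nat list \<Rightarrow> bool" where
  "super_iso n I J \<longleftrightarrow> (\<exists>\<phi>.
      (\<forall>x\<in>FA n. \<phi> x \<in> FA n)
    \<and> (\<forall>x\<in>FA n. \<forall>y\<in>FA n. fsub x y \<in> NI n I \<longrightarrow> fsub (\<phi> x) (\<phi> y) \<in> NI n J)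
    \<and> (\<forall>x\<in>FA n. \<forall>y\<in>FA n. fsub (\<phi> (fadd x y)) (fadd (\<phi> x) (\<phi> y)) \<in> NI n J)
    \<and> (\<forall>a\<in>FA n. \<forall>x\<in>FA n. fsub (\<phi> (fmul a x)) (fmul a (\<phi> x)) \<in> NI n J)
    \<and> (\<forall>x\<in>FA n. \<phi> x \<in> NI n J \<longrightarrow> x \<in> NI n I)
    \<and> (\<forall>y\<in>FA n. \<exists>x\<in>FA n. fsub (\<phi> x) y \<in> NI n J)
    \<and> (\<forall>x\<in>FA n. homog_even x \<longrightarrow> (\<exists>y\<in>FA n. homog_even y \<and> fsub (\<phi> x) y \<in> NI n J))
    \<and> (\<forall>x\<in>FA n. homog_odd x \<longrightarrow> (\<exists>y\<in>FA n. homog_odd y \<and> fsub (\<phi> x) y \<in> NI n J)))"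

end

theory Submission
  imports Defs
begin

text \<open>
  Removing a descent \<open>a\<close> that is not a peak (\<open>a = 1\<close> or \<open>a - 1\<close> is a descent) and is not
  followed by a descent does not change \<open>M\<close> up to isomorphism: right multiplication by the even
  unit \<open>1 - c\<^sub>a c\<^sub>a\<^sub>+\<^sub>1\<close>, whose inverse is \<open>(1 + c\<^sub>a c\<^sub>a\<^sub>+\<^sub>1) / 2\<close>, carries the annihilator
  of \<open>\<epsilon>\<close> for the old descent set into the one for the new set. Removing the largest non-peak
  descent again and again does not change the peak set and ends at the peak set itself, so
  equal peak sets give isomorphic modules.

  Conversely, an isomorphism \<open>\<phi> : M\<^sub>I \<rightarrow> M\<^sub>J\<close> sends \<open>\<epsilon>\<^sub>I\<close> to a generator \<open>v\<close> of \<open>M\<^sub>J\<close> on which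
  every \<open>T\<^sub>j\<close> acts as on \<open>\<epsilon>\<^sub>I\<close>. If \<open>a\<close> is a peak of \<open>I\<close>, then \<open>T\<^sub>a\<^sub>-\<^sub>1 v = 0\<close> and \<open>T\<^sub>a v = -v\<close>.
  Writing \<open>M\<^sub>J\<close> in the basis \<open>c\<^sub>X \<epsilon>\<^sub>J\<close>, a computation on the three positions \<open>a - 1, a, a + 1\<close>
  shows that such a \<open>v\<close> vanishes unless \<open>a\<close> is also a peak of \<open>J\<close>.
\<close>

definition monom :: "complex \<Rightarrow> gen list \<Rightarrow> fa" where
  "monom c u = (\<lambda>w. if u = w then c else 0)"

definition scal :: "complex \<Rightarrow> fa" where
  "scal c = comb [(c, [])]"

lemma comb_Nil [simp]: "comb [] = (\<lambda>_. 0)"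
  by (simp add: comb_def)

lemma comb_Cons: "comb ((c, u) # xs) = fadd (monom c u) (comb xs)"
  by (simp add: comb_def fadd_def monom_def)

lemma comb_append: "comb (xs @ ys) = fadd (comb xs) (comb ys)"
  by (simp add: comb_def fadd_def)

lemma comb_support: "comb xs w \<noteq> 0 \<Longrightarrow> w \<in> snd ` set xs"
  by (induction xs) (auto simp: comb_Cons fadd_def monom_def split: if_splits)

lemma finite_comb_support: "finite {w. comb xs w \<noteq> 0}"
  by (rule finite_subset[of _ "snd ` set xs"]) (auto dest: comb_support)

lemma comb_eqI:
  assumes "\<And>u. u \<in> snd ` set (xs @ ys) \<Longrightarrow> comb xs u = comb ys u"
  shows "comb xs = comb ys"
proof
  fix w
  show "comb xs w = comb ys w"
    using assms comb_support[of xs w] comb_support[of ys w] by force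
qed

lemma comb_of_finite_support:
  assumes "finite {w. p w \<noteq> 0}"
  obtains xs where "p = comb xs" "snd ` set xs \<subseteq> {w. p w \<noteq> 0}"
proof -
  obtain L where L: "set L = {w. p w \<noteq> 0}" "distinct L"
    using finite_distinct_list[OF assms] by blast
  have "comb (map (\<lambda>w. (p w, w)) L) w = p w" for w
    using L assms by (simp add: comb_def o_def sum_list_distinct_conv_sum_set)
  then show thesis
    using L(1) by (intro that[of "map (\<lambda>w. (p w, w)) L"]) auto
qed

lemma split_word_iff:
  "k \<le> length w \<Longrightarrow> (u = take k w \<and> v = drop k w) \<longleftrightarrow> (k = length u \<and> u @ v = w)"
  by (metis append_eq_conv_conj append_take_drop_id length_take min.absorb2)

lemma fmul_monom: "fmul (monom c u) (monom d v) = monom (c * d) (u @ v)"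
proof
  fix w
  have "fmul (monom c u) (monom d v) w
      = (\<Sum>k\<le>length w. if k = length u then (if u @ v = w then c * d else 0) else 0)"
    unfolding fmul_def monom_def
    by (intro sum.cong refl, case_tac "u = take x w \<and> v = drop x w") (auto simp: split_word_iff)
  also have "\<dots> = monom (c * d) (u @ v) w"
    by (auto simp: monom_def)
  finally show "fmul (monom c u) (monom d v) w = monom (c * d) (u @ v) w" .
qed

lemma fmul_fadd_left: "fmul (fadd p q) r = fadd (fmul p r) (fmul q r)"
  by (simp add: fmul_def fadd_def ring_distribs sum.distrib)

lemma fmul_fadd_right: "fmul p (fadd q r) = fadd (fmul p q) (fmul p r)"
  by (simp add: fmul_def fadd_def ring_distribs sum.distrib)

lemma fmul_fsub_left: "fmul (fsub p q) r = fsub (fmul p r) (fmul q r)"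
  by (simp add: fmul_def fsub_def ring_distribs sum_subtractf)

lemma fmul_fsub_right: "fmul p (fsub q r) = fsub (fmul p q) (fmul p r)"
  by (simp add: fmul_def fsub_def ring_distribs sum_subtractf)

lemma fmul_zero_left [simp]: "fmul (\<lambda>_. 0) p = (\<lambda>_. 0)"
  and fmul_zero_right [simp]: "fmul p (\<lambda>_. 0) = (\<lambda>_. 0)"
  by (simp_all add: fmul_def)

lemma fsub_zero_right [simp]: "fsub p (\<lambda>_. 0) = p"
  and fsub_self [simp]: "fsub p p = (\<lambda>_. 0)"
  by (simp_all add: fsub_def)

lemma fmul_scal_left: "fmul (scal c) p = (\<lambda>w. c * p w)"
proof
  fix w
  have "fmul (scal c) p w = (\<Sum>k\<le>length w. if k = 0 then c * p w else 0)"
    unfolding fmul_def scal_def by (intro sum.cong) (auto simp: comb_def)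
  then show "fmul (scal c) p w = c * p w" by simp
qed

lemma fmul_scal_right: "fmul p (scal c) = (\<lambda>w. p w * c)"
proof
  fix w
  have "fmul p (scal c) w = (\<Sum>k\<le>length w. if k = length w then p w * c else 0)"
    unfolding fmul_def scal_def by (intro sum.cong) (auto simp: comb_def)
  then show "fmul p (scal c) w = p w * c" by simp
qed

lemma fmul_one_left [simp]: "fmul (scal 1) p = p"
  and fmul_one_right [simp]: "fmul p (scal 1) = p"
  by (simp_all add: fmul_scal_left fmul_scal_right)

lemma fsub_eq_fadd_neg: "fsub p q = fadd p (fmul (scal (-1)) q)"
  by (simp add: fsub_def fadd_def fmul_scal_left)

definition comb_mult :: "(complex \<times> gen list) list \<Rightarrow> (complex \<times> gen list) list \<Rightarrow> (complex \<times> gen list) list" where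
  "comb_mult xs ys = concat (map (\<lambda>(c, u). map (\<lambda>(d, v). (c * d, u @ v)) ys) xs)"

lemma comb_mult_Nil [simp]: "comb_mult [] ys = []" "comb_mult xs [] = []"
  by (simp_all add: comb_mult_def)

lemma comb_mult_Cons: "comb_mult ((c, u) # xs) ys = map (\<lambda>(d, v). (c * d, u @ v)) ys @ comb_mult xs ys"
  by (simp add: comb_mult_def)

lemma comb_mult_assoc: "comb_mult (comb_mult xs ys) zs = comb_mult xs (comb_mult ys zs)"
proof -
  have "comb_mult (map (\<lambda>(d, v). (c * d, u @ v)) ys) zs
      = map (\<lambda>(d, v). (c * d, u @ v)) (comb_mult ys zs)" for c u ys
    by (induction ys) (auto simp: comb_mult_Cons mult.assoc)
  then show ?thesis
    by (induction xs) (auto simp: comb_mult_Cons comb_mult_def)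
qed

lemma fmul_comb: "fmul (comb xs) (comb ys) = comb (comb_mult xs ys)"
proof -
  have "fmul (monom c u) (comb ys) = comb (map (\<lambda>(d, v). (c * d, u @ v)) ys)" for c u
    by (induction ys) (auto simp: comb_Cons fmul_fadd_right fmul_monom)
  then show ?thesis
    by (induction xs) (auto simp: comb_Cons comb_mult_Cons comb_append fmul_fadd_left)
qed

lemma fmul_assoc:
  assumes "finite {w. p w \<noteq> 0}" "finite {w. q w \<noteq> 0}" "finite {w. r w \<noteq> 0}"
  shows "fmul (fmul p q) r = fmul p (fmul q r)"
  using assms
  by (elim comb_of_finite_support) (simp add: fmul_comb comb_mult_assoc)

lemma gens_T [simp]: "T i \<in> gens n \<longleftrightarrow> Tv n i"
  and gens_C [simp]: "C i \<in> gens n \<longleftrightarrow> Cv n i"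
  by (auto simp: gens_def)

lemma FA_finite_support: "p \<in> FA n \<Longrightarrow> finite {w. p w \<noteq> 0}"
  by (simp add: FA_def)

lemma comb_in_FA: "(\<And>c u. (c, u) \<in> set xs \<Longrightarrow> set u \<subseteq> gens n) \<Longrightarrow> comb xs \<in> FA n"
  unfolding FA_def using finite_comb_support by (force dest: comb_support)

lemma FA_comb_words:
  assumes "p \<in> FA n"
  obtains xs where "p = comb xs" "\<And>c u. (c, u) \<in> set xs \<Longrightarrow> set u \<subseteq> gens n"
  using assms comb_of_finite_support[OF FA_finite_support[OF assms]]
  unfolding FA_def by (metis (mono_tags, lifting) image_subset_iff mem_Collect_eq snd_conv)

lemma zero_in_FA: "(\<lambda>_. 0) \<in> FA n"
  by (simp add: FA_def)

lemma scal_in_FA: "scal c \<in> FA n"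
  unfolding scal_def by (rule comb_in_FA) auto

lemma fmul_in_FA:
  assumes "p \<in> FA n" "q \<in> FA n"
  shows "fmul p q \<in> FA n"
proof -
  obtain xs ys where pq: "p = comb xs" "q = comb ys"
    and "\<And>c u. (c, u) \<in> set xs \<Longrightarrow> set u \<subseteq> gens n" "\<And>c u. (c, u) \<in> set ys \<Longrightarrow> set u \<subseteq> gens n"
    using assms by (metis FA_comb_words)
  then show ?thesis
    unfolding pq fmul_comb by (intro comb_in_FA) (fastforce simp: comb_mult_def)
qed

lemma fadd_in_FA:
  assumes "p \<in> FA n" "q \<in> FA n"
  shows "fadd p q \<in> FA n"
proof -
  have "{w. fadd p q w \<noteq> 0} \<subseteq> {w. p w \<noteq> 0} \<union> {w. q w \<noteq> 0}"
    by (auto simp: fadd_def)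
  with assms show ?thesis
    unfolding FA_def by (auto simp: fadd_def intro: finite_subset)
qed

lemma fsub_in_FA: "p \<in> FA n \<Longrightarrow> q \<in> FA n \<Longrightarrow> fsub p q \<in> FA n"
  unfolding fsub_eq_fadd_neg by (intro fadd_in_FA fmul_in_FA scal_in_FA)

lemma Rideal_subset_FA: "x \<in> Rideal n \<Longrightarrow> x \<in> FA n"
proof (induction rule: Rideal.induct)
  case (rel r)
  then show ?case
    unfolding rels_def by (auto intro!: comb_in_FA simp: Tv_def Cv_def)
qed (auto simp: zero_in_FA fadd_in_FA fmul_in_FA)

section \<open>The modules \<open>M\<close> for arbitrary descent sets\<close>

definition des_gen :: "nat set \<Rightarrow> nat \<Rightarrow> fa" where
  "des_gen D j = comb [(1, [T j]), (if j \<in> D then 1 else 0, [])]"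

text \<open>The left ideal \<open>NI n I\<close> with \<open>Des I\<close> replaced by an arbitrary set \<open>D\<close>, so that descents
  can be removed one at a time.\<close>

inductive_set kerM :: "nat \<Rightarrow> nat set \<Rightarrow> fa set" for n D where
  ideal: "x \<in> Rideal n \<Longrightarrow> x \<in> kerM n D"
| gen: "Tv n j \<Longrightarrow> des_gen D j \<in> kerM n D"
| add: "x \<in> kerM n D \<Longrightarrow> y \<in> kerM n D \<Longrightarrow> fadd x y \<in> kerM n D"
| lmul: "a \<in> FA n \<Longrightarrow> x \<in> kerM n D \<Longrightarrow> fmul a x \<in> kerM n D"

lemma NI_eq_kerM: "NI n I = kerM n (Des I)"
proof (intro set_eqI iffI)
  show "x \<in> kerM n (Des I)" if "x \<in> NI n I" for x
    using that by induction (blast intro: kerM.intros kerM.gen[unfolded des_gen_def])+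
  show "x \<in> NI n I" if "x \<in> kerM n (Des I)" for x
    using that by induction (blast intro: NI.intros NI.gen[folded des_gen_def])+
qed

lemma kerM_subset_FA: "x \<in> kerM n D \<Longrightarrow> x \<in> FA n"
proof (induction rule: kerM.induct)
  case (gen j)
  then show ?case
    unfolding des_gen_def by (intro comb_in_FA) auto
qed (auto simp: Rideal_subset_FA fadd_in_FA fmul_in_FA)

lemma zero_in_kerM: "(\<lambda>_. 0) \<in> kerM n D"
  by (intro kerM.ideal Rideal.zero)

lemma fsub_in_kerM: "x \<in> kerM n D \<Longrightarrow> y \<in> kerM n D \<Longrightarrow> fsub x y \<in> kerM n D"
  unfolding fsub_eq_fadd_neg by (intro kerM.add kerM.lmul scal_in_FA)

lemma kerM_sym: "fsub x y \<in> kerM n D \<Longrightarrow> fsub y x \<in> kerM n D"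
proof -
  have "fsub y x = fmul (scal (-1)) (fsub x y)"
    by (auto simp: fsub_def fmul_scal_left)
  then show "fsub x y \<in> kerM n D \<Longrightarrow> fsub y x \<in> kerM n D"
    by (auto intro: kerM.lmul scal_in_FA)
qed

lemma kerM_trans: "fsub x y \<in> kerM n D \<Longrightarrow> fsub y z \<in> kerM n D \<Longrightarrow> fsub x z \<in> kerM n D"
proof -
  have "fsub x z = fadd (fsub x y) (fsub y z)"
    by (auto simp: fsub_def fadd_def)
  then show "fsub x y \<in> kerM n D \<Longrightarrow> fsub y z \<in> kerM n D \<Longrightarrow> fsub x z \<in> kerM n D"
    by (auto intro: kerM.add)
qed

lemma kerM_fsub_mem: "fsub x y \<in> kerM n D \<Longrightarrow> y \<in> kerM n D \<Longrightarrow> x \<in> kerM n D"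
proof -
  have "x = fadd (fsub x y) y"
    by (auto simp: fsub_def fadd_def)
  then show "fsub x y \<in> kerM n D \<Longrightarrow> y \<in> kerM n D \<Longrightarrow> x \<in> kerM n D"
    by (metis kerM.add)
qed

lemma kerM_right_mult:
  assumes "u \<in> FA n" and "\<And>j. Tv n j \<Longrightarrow> fmul (des_gen D j) u \<in> kerM n E"
    and "x \<in> kerM n D"
  shows "fmul x u \<in> kerM n E"
  using assms(3)
proof induction
  case (ideal x)
  then show ?case by (intro kerM.ideal Rideal.rmul assms(1))
next
  case (lmul a x)
  have "fmul (fmul a x) u = fmul a (fmul x u)"
    using lmul.hyps kerM_subset_FA assms(1) by (intro fmul_assoc FA_finite_support)
  then show ?case using lmul by (simp add: kerM.lmul)
qed (simp_all add: assms(2) fmul_fadd_left kerM.add)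

lemma nC_append [simp]: "nC (u @ v) = nC u + nC v"
  by (simp add: nC_def)

lemma fmul_nonzero_nC:
  assumes "fmul p q w \<noteq> 0"
  obtains u v where "p u \<noteq> 0" "q v \<noteq> 0" "nC w = nC u + nC v"
proof -
  have "\<exists>k. p (take k w) * q (drop k w) \<noteq> 0"
  proof (rule ccontr)
    assume "\<nexists>k. p (take k w) * q (drop k w) \<noteq> 0"
    then have "fmul p q w = 0"
      unfolding fmul_def by (intro sum.neutral) blast
    with assms show False by contradiction
  qed
  then obtain k where "p (take k w) \<noteq> 0" "q (drop k w) \<noteq> 0"
    by auto
  moreover have "nC w = nC (take k w) + nC (drop k w)"
    by (metis append_take_drop_id nC_append)
  ultimately show thesis by (rule that)
qed

lemma homog_even_fmul: "homog_even p \<Longrightarrow> homog_even q \<Longrightarrow> homog_even (fmul p q)"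
  unfolding homog_even_def by (metis fmul_nonzero_nC even_add)

lemma homog_odd_fmul: "homog_odd p \<Longrightarrow> homog_even q \<Longrightarrow> homog_odd (fmul p q)"
  unfolding homog_even_def homog_odd_def by (metis fmul_nonzero_nC odd_add)

lemma homog_even_scal: "homog_even (scal c)"
  by (auto simp: homog_even_def scal_def comb_def nC_def split: if_splits)

lemma inverse_mod_Rideal_mult:
  assumes FA: "p \<in> FA n" "q \<in> FA n" "r \<in> FA n" "s \<in> FA n"
    and "fsub (fmul q r) (scal 1) \<in> Rideal n" "fsub (fmul p s) (scal 1) \<in> Rideal n"
  shows "fsub (fmul (fmul p q) (fmul r s)) (scal 1) \<in> Rideal n"
proof -
  have "fmul (fmul p q) (fmul r s) = fmul p (fmul q (fmul r s))"
    using FA by (intro fmul_assoc FA_finite_support fmul_in_FA)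
  also have "fmul q (fmul r s) = fmul (fmul q r) s"
    using FA by (intro fmul_assoc[symmetric] FA_finite_support)
  finally have "fmul (fmul p q) (fmul r s) = fmul p (fmul (fmul q r) s)" .
  then have "fsub (fmul (fmul p q) (fmul r s)) (scal 1)
      = fadd (fmul p (fmul (fsub (fmul q r) (scal 1)) s)) (fsub (fmul p s) (scal 1))"
    by (simp add: fmul_fsub_left fmul_fsub_right) (auto simp: fsub_def fadd_def)
  with assms show ?thesis
    by (simp add: Rideal.add Rideal.lmul Rideal.rmul)
qed

lemma cancel_inverse_mod_Rideal:
  assumes "x \<in> FA n" "p \<in> FA n" "q \<in> FA n" "fsub (fmul p q) (scal 1) \<in> Rideal n"
  shows "fsub (fmul (fmul x p) q) x \<in> Rideal n"
proof -
  have "fsub (fmul (fmul x p) q) x = fmul x (fsub (fmul p q) (scal 1))"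
    using assms(1-3) by (simp add: fmul_assoc FA_finite_support fmul_fsub_right)
  with assms show ?thesis
    by (simp add: Rideal.lmul)
qed

definition right_mult_iso :: "nat \<Rightarrow> nat set \<Rightarrow> nat set \<Rightarrow> fa \<Rightarrow> fa \<Rightarrow> bool" where
  "right_mult_iso n D E u w \<longleftrightarrow>
     u \<in> FA n \<and> w \<in> FA n \<and> homog_even u \<and> homog_even w
   \<and> (\<forall>x\<in>kerM n D. fmul x u \<in> kerM n E) \<and> (\<forall>x\<in>kerM n E. fmul x w \<in> kerM n D)
   \<and> fsub (fmul u w) (scal 1) \<in> Rideal n \<and> fsub (fmul w u) (scal 1) \<in> Rideal n"

lemma right_mult_iso_refl: "right_mult_iso n D D (scal 1) (scal 1)"
  by (simp add: right_mult_iso_def scal_in_FA homog_even_scal Rideal.zero)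

lemma right_mult_iso_sym: "right_mult_iso n D E u w \<Longrightarrow> right_mult_iso n E D w u"
  by (auto simp: right_mult_iso_def)

lemma right_mult_iso_trans:
  assumes "right_mult_iso n D E u w" "right_mult_iso n E F u' w'"
  shows "right_mult_iso n D F (fmul u u') (fmul w' w)"
proof -
  have FA: "u \<in> FA n" "w \<in> FA n" "u' \<in> FA n" "w' \<in> FA n"
    and even: "homog_even u" "homog_even w" "homog_even u'" "homog_even w'"
    using assms by (simp_all add: right_mult_iso_def)
  have assoc: "fmul x (fmul p q) = fmul (fmul x p) q" if "x \<in> FA n" "p \<in> FA n" "q \<in> FA n" for x p q
    using that by (intro fmul_assoc[symmetric] FA_finite_support)
  have "fmul x (fmul u u') \<in> kerM n F" if "x \<in> kerM n D" for x
    using assms that FA kerM_subset_FA[OF that] unfolding right_mult_iso_def by (simp add: assoc)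
  moreover have "fmul x (fmul w' w) \<in> kerM n D" if "x \<in> kerM n F" for x
    using assms that FA kerM_subset_FA[OF that] unfolding right_mult_iso_def by (simp add: assoc)
  moreover have "fsub (fmul (fmul u u') (fmul w' w)) (scal 1) \<in> Rideal n"
    "fsub (fmul (fmul w' w) (fmul u u')) (scal 1) \<in> Rideal n"
    using assms FA unfolding right_mult_iso_def by (blast intro: inverse_mod_Rideal_mult)+
  ultimately show ?thesis
    unfolding right_mult_iso_def using FA even by (intro conjI ballI fmul_in_FA homog_even_fmul)
qed

lemma super_iso_if_right_mult_iso:
  assumes "right_mult_iso n (Des I) (Des J) u w"
  shows "super_iso n I J"
proof -
  let ?D = "Des I" and ?E = "Des J"
  have u: "u \<in> FA n" "homog_even u" and w: "w \<in> FA n"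
    and uw: "fsub (fmul u w) (scal 1) \<in> Rideal n" and wu: "fsub (fmul w u) (scal 1) \<in> Rideal n"
    and ker_u: "\<And>x. x \<in> kerM n ?D \<Longrightarrow> fmul x u \<in> kerM n ?E"
    and ker_w: "\<And>x. x \<in> kerM n ?E \<Longrightarrow> fmul x w \<in> kerM n ?D"
    using assms by (simp_all add: right_mult_iso_def)
  show ?thesis
    unfolding super_iso_def NI_eq_kerM
  proof (rule exI[of _ "\<lambda>x. fmul x u"], intro conjI ballI impI)
    fix x
    assume x: "x \<in> FA n" and xu: "fmul x u \<in> kerM n ?E"
    have "fsub x (fmul (fmul x u) w) \<in> kerM n ?D"
      using kerM.ideal[OF cancel_inverse_mod_Rideal[OF x u(1) w uw]] by (rule kerM_sym)
    then show "x \<in> kerM n ?D"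
      using ker_w[OF xu] by (rule kerM_fsub_mem)
  next
    fix y
    assume y: "y \<in> FA n"
    then show "\<exists>x\<in>FA n. fsub (fmul x u) y \<in> kerM n ?E"
      using kerM.ideal[OF cancel_inverse_mod_Rideal[OF y w u(1) wu]] fmul_in_FA[OF y w] by blast
  next
    fix x
    assume "x \<in> FA n" "homog_even x"
    then show "\<exists>y\<in>FA n. homog_even y \<and> fsub (fmul x u) y \<in> kerM n ?E"
      using u by (intro bexI[of _ "fmul x u"]) (auto simp: fmul_in_FA homog_even_fmul zero_in_kerM)
  next
    fix x
    assume "x \<in> FA n" "homog_odd x"
    then show "\<exists>y\<in>FA n. homog_odd y \<and> fsub (fmul x u) y \<in> kerM n ?E"
      using u by (intro bexI[of _ "fmul x u"]) (auto simp: fmul_in_FA homog_odd_fmul zero_in_kerM)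
  qed (use u ker_u zero_in_kerM in
      \<open>auto simp: fmul_in_FA fmul_fadd_left fmul_assoc FA_finite_support simp flip: fmul_fsub_left\<close>)
qed

section \<open>Removing a descent that is not a peak\<close>

definition sandwich :: "(complex \<times> gen list) list \<Rightarrow> fa \<Rightarrow> (complex \<times> gen list) list \<Rightarrow> fa" where
  "sandwich L r R = fmul (comb L) (fmul r (comb R))"

lemma sandwich_in_Rideal:
  "r \<in> Rideal n \<Longrightarrow> comb L \<in> FA n \<Longrightarrow> comb R \<in> FA n \<Longrightarrow> sandwich L r R \<in> Rideal n"
  unfolding sandwich_def by (intro Rideal.lmul Rideal.rmul)

text \<open>Below, membership \<open>x \<in> kerM n D\<close> is shown by writing \<open>x = p g + \<Sum>\<^sub>i p\<^sub>i r\<^sub>i q\<^sub>i\<close> with \<open>g\<close> a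
  generator of \<open>kerM n D\<close> and \<open>r\<^sub>i\<close> defining relations; the identity is checked by expanding
  both sides into words.\<close>

lemma kerM_decomp:
  "x = fadd (fmul (comb L) g) r \<Longrightarrow> g \<in> kerM n D \<Longrightarrow> r \<in> Rideal n \<Longrightarrow> comb L \<in> FA n
    \<Longrightarrow> x \<in> kerM n D"
  by (metis kerM.add kerM.lmul kerM.ideal)

lemma fadd_comb: "fadd (comb xs) (comb ys) = comb (xs @ ys)"
  by (simp add: comb_append)

lemma sandwich_comb: "sandwich L (comb B) R = comb (comb_mult L (comb_mult B R))"
  by (simp add: sandwich_def fmul_comb)

lemmas comb_normalize = fmul_comb sandwich_comb fadd_comb comb_mult_Cons comb_mult_Nil

lemma rel_C_square: "Cv n i \<Longrightarrow> comb [(1, [C i, C i]), (1, [])] \<in> Rideal n"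
  and rel_C_anticomm:
    "Cv n i \<Longrightarrow> Cv n j \<Longrightarrow> i \<noteq> j \<Longrightarrow> comb [(1, [C i, C j]), (1, [C j, C i])] \<in> Rideal n"
  and rel_T_C_comm: "Tv n i \<Longrightarrow> Cv n j \<Longrightarrow> j \<noteq> i \<Longrightarrow> j \<noteq> i + 1
    \<Longrightarrow> comb [(1, [T i, C j]), (-1, [C j, T i])] \<in> Rideal n"
  and rel_T_C: "Tv n i \<Longrightarrow> comb [(1, [T i, C i]), (-1, [C (i + 1), T i])] \<in> Rideal n"
  and rel_T_C_Suc: "Tv n i
    \<Longrightarrow> comb [(1, [T i, C (i + 1)]), (1, [C (i + 1)]), (-1, [C i, T i]), (-1, [C i])] \<in> Rideal n"
  by (rule Rideal.rel, unfold rels_def, blast)+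

definition cliff_pair :: "complex \<Rightarrow> complex \<Rightarrow> nat \<Rightarrow> fa" where
  "cliff_pair \<alpha> \<beta> a = comb [(\<alpha>, []), (\<beta>, [C a, C (a + 1)])]"

lemma des_gen_cliff_pair_commute:
  assumes a: "1 \<le> a" "a < n" and j: "Tv n j" "j \<noteq> a"
    and "j = a + 1 \<Longrightarrow> j \<notin> D" and "j + 1 = a \<Longrightarrow> j \<in> D"
  shows "fmul (des_gen D j) (cliff_pair \<alpha> \<beta> a) \<in> kerM n D"
proof -
  consider "j + 1 = a" | "j = a + 1" | "j + 1 \<noteq> a" "j \<noteq> a + 1"
    by blast
  then show ?thesis
  proof cases
    case 1
    then have jD: "j \<in> D" using assms by blast
    show ?thesis
    proof (rule kerM_decomp)
      \<comment> \<open>\<open>(T\<^sub>j + 1) c\<^sub>j\<^sub>+\<^sub>1 = c\<^sub>j (T\<^sub>j + 1)\<close>, and \<open>T\<^sub>j\<close> commutes with \<open>c\<^sub>j\<^sub>+\<^sub>2\<close>\<close>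
      show "fmul (des_gen D j) (cliff_pair \<alpha> \<beta> a)
        = fadd (fmul (comb [(\<alpha>, []), (\<beta>, [C j, C (a + 1)])]) (des_gen D j))
            (fadd (sandwich [(\<beta>, [])] (comb [(1, [T j, C (j + 1)]), (1, [C (j + 1)]), (-1, [C j, T j]), (-1, [C j])]) [(1, [C (a + 1)])])
                  (sandwich [(\<beta>, [C j])] (comb [(1, [T j, C (a + 1)]), (-1, [C (a + 1), T j])]) [(1, [])]))"
        using 1 jD unfolding des_gen_def cliff_pair_def
        by (simp only: comb_normalize, intro comb_eqI) (simp add: comb_def algebra_simps)
      show "fadd (sandwich [(\<beta>, [])] (comb [(1, [T j, C (j + 1)]), (1, [C (j + 1)]), (-1, [C j, T j]), (-1, [C j])]) [(1, [C (a + 1)])])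
                 (sandwich [(\<beta>, [C j])] (comb [(1, [T j, C (a + 1)]), (-1, [C (a + 1), T j])]) [(1, [])]) \<in> Rideal n"
        using 1 a j by (intro Rideal.add sandwich_in_Rideal rel_T_C_Suc rel_T_C_comm comb_in_FA)
          (auto simp: Tv_def Cv_def)
    qed (use 1 a j in \<open>auto intro!: kerM.gen comb_in_FA simp: Tv_def Cv_def\<close>)
  next
    case 2
    then have jD: "j \<notin> D" using assms by blast
    show ?thesis
    proof (rule kerM_decomp)
      \<comment> \<open>\<open>T\<^sub>a\<^sub>+\<^sub>1\<close> commutes with \<open>c\<^sub>a\<close>, and \<open>T\<^sub>a\<^sub>+\<^sub>1 c\<^sub>a\<^sub>+\<^sub>1 = c\<^sub>a\<^sub>+\<^sub>2 T\<^sub>a\<^sub>+\<^sub>1\<close>\<close>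
      show "fmul (des_gen D j) (cliff_pair \<alpha> \<beta> a)
        = fadd (fmul (comb [(\<alpha>, []), (\<beta>, [C a, C (j + 1)])]) (des_gen D j))
            (fadd (sandwich [(\<beta>, [])] (comb [(1, [T j, C a]), (-1, [C a, T j])]) [(1, [C j])])
                  (sandwich [(\<beta>, [C a])] (comb [(1, [T j, C j]), (-1, [C (j + 1), T j])]) [(1, [])]))"
        using 2 jD unfolding des_gen_def cliff_pair_def
        by (simp only: comb_normalize, intro comb_eqI) (simp add: comb_def algebra_simps)
      show "fadd (sandwich [(\<beta>, [])] (comb [(1, [T j, C a]), (-1, [C a, T j])]) [(1, [C j])])
                 (sandwich [(\<beta>, [C a])] (comb [(1, [T j, C j]), (-1, [C (j + 1), T j])]) [(1, [])]) \<in> Rideal n"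
        using 2 a j by (intro Rideal.add sandwich_in_Rideal rel_T_C_comm rel_T_C comb_in_FA)
          (auto simp: Tv_def Cv_def)
    qed (use 2 a j in \<open>auto intro!: kerM.gen comb_in_FA simp: Tv_def Cv_def\<close>)
  next
    case 3
    show ?thesis
    proof (rule kerM_decomp)
      show "fmul (des_gen D j) (cliff_pair \<alpha> \<beta> a)
        = fadd (fmul (comb [(\<alpha>, []), (\<beta>, [C a, C (a + 1)])]) (des_gen D j))
            (fadd (sandwich [(\<beta>, [])] (comb [(1, [T j, C a]), (-1, [C a, T j])]) [(1, [C (a + 1)])])
                  (sandwich [(\<beta>, [C a])] (comb [(1, [T j, C (a + 1)]), (-1, [C (a + 1), T j])]) [(1, [])]))"
        using 3 j unfolding des_gen_def cliff_pair_def
        by (simp only: comb_normalize, intro comb_eqI) (simp add: comb_def algebra_simps)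
      show "fadd (sandwich [(\<beta>, [])] (comb [(1, [T j, C a]), (-1, [C a, T j])]) [(1, [C (a + 1)])])
                 (sandwich [(\<beta>, [C a])] (comb [(1, [T j, C (a + 1)]), (-1, [C (a + 1), T j])]) [(1, [])]) \<in> Rideal n"
        using 3 a j by (intro Rideal.add sandwich_in_Rideal rel_T_C_comm comb_in_FA)
          (auto simp: Tv_def Cv_def)
    qed (use a j in \<open>auto intro!: kerM.gen comb_in_FA simp: Cv_def\<close>)
  qed
qed

lemma des_gen_cliff_pair_remove:
  assumes a: "1 \<le> a" "a < n" "a \<in> D"
  shows "fmul (des_gen D a) (cliff_pair 1 (-1) a) \<in> kerM n (D - {a})"
proof (rule kerM_decomp)
  \<comment> \<open>\<open>(T\<^sub>a + 1)(1 - c\<^sub>a c\<^sub>a\<^sub>+\<^sub>1) = (1 - c\<^sub>a\<^sub>+\<^sub>1 c\<^sub>a) T\<^sub>a\<close>\<close>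
  show "fmul (des_gen D a) (cliff_pair 1 (-1) a) =
    fadd (fmul (comb [(1, []), (-1, [C (a + 1), C a])]) (des_gen (D - {a}) a))
      (fadd (fadd (fadd (sandwich [(-1, [])] (comb [(1, [T a, C a]), (-1, [C (a + 1), T a])]) [(1, [C (a + 1)])])
                        (sandwich [(-1, [C (a + 1)])] (comb [(1, [T a, C (a + 1)]), (1, [C (a + 1)]), (-1, [C a, T a]), (-1, [C a])]) [(1, [])]))
                  (sandwich [(1, [])] (comb [(1, [C (a + 1), C (a + 1)]), (1, [])]) [(1, [])]))
            (sandwich [(-1, [])] (comb [(1, [C (a + 1), C a]), (1, [C a, C (a + 1)])]) [(1, [])]))"
    using a unfolding des_gen_def cliff_pair_def
    by (simp only: comb_normalize, intro comb_eqI) (simp add: comb_def)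
  show "fadd (fadd (fadd (sandwich [(-1, [])] (comb [(1, [T a, C a]), (-1, [C (a + 1), T a])]) [(1, [C (a + 1)])])
                         (sandwich [(-1, [C (a + 1)])] (comb [(1, [T a, C (a + 1)]), (1, [C (a + 1)]), (-1, [C a, T a]), (-1, [C a])]) [(1, [])]))
                   (sandwich [(1, [])] (comb [(1, [C (a + 1), C (a + 1)]), (1, [])]) [(1, [])]))
             (sandwich [(-1, [])] (comb [(1, [C (a + 1), C a]), (1, [C a, C (a + 1)])]) [(1, [])]) \<in> Rideal n"
    using a by (intro Rideal.add sandwich_in_Rideal rel_T_C rel_T_C_Suc rel_C_square rel_C_anticomm comb_in_FA)
      (auto simp: Tv_def Cv_def)
qed (use a in \<open>auto intro!: kerM.gen comb_in_FA simp: Tv_def Cv_def\<close>)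

lemma des_gen_cliff_pair_insert:
  assumes a: "1 \<le> a" "a < n" "a \<in> D"
  shows "fmul (des_gen (D - {a}) a) (cliff_pair (1/2) (1/2) a) \<in> kerM n D"
proof (rule kerM_decomp)
  \<comment> \<open>\<open>T\<^sub>a (1 + c\<^sub>a c\<^sub>a\<^sub>+\<^sub>1) = (1 + c\<^sub>a\<^sub>+\<^sub>1 c\<^sub>a)(T\<^sub>a + 1)\<close>\<close>
  show "fmul (des_gen (D - {a}) a) (cliff_pair (1/2) (1/2) a) =
    fadd (fmul (comb [(1/2, []), (1/2, [C (a + 1), C a])]) (des_gen D a))
      (fadd (fadd (sandwich [(1/2, [])] (comb [(1, [T a, C a]), (-1, [C (a + 1), T a])]) [(1, [C (a + 1)])])
                  (sandwich [(1/2, [C (a + 1)])] (comb [(1, [T a, C (a + 1)]), (1, [C (a + 1)]), (-1, [C a, T a]), (-1, [C a])]) [(1, [])]))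
            (sandwich [(-1/2, [])] (comb [(1, [C (a + 1), C (a + 1)]), (1, [])]) [(1, [])]))"
    using a unfolding des_gen_def cliff_pair_def
    by (simp only: comb_normalize, intro comb_eqI) (simp add: comb_def)
  show "fadd (fadd (sandwich [(1/2, [])] (comb [(1, [T a, C a]), (-1, [C (a + 1), T a])]) [(1, [C (a + 1)])])
                   (sandwich [(1/2, [C (a + 1)])] (comb [(1, [T a, C (a + 1)]), (1, [C (a + 1)]), (-1, [C a, T a]), (-1, [C a])]) [(1, [])]))
             (sandwich [(-1/2, [])] (comb [(1, [C (a + 1), C (a + 1)]), (1, [])]) [(1, [])]) \<in> Rideal n"
    using a by (intro Rideal.add sandwich_in_Rideal rel_T_C rel_T_C_Suc rel_C_square comb_in_FA)
      (auto simp: Tv_def Cv_def)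
qed (use a in \<open>auto intro!: kerM.gen comb_in_FA simp: Tv_def Cv_def\<close>)

lemma cliff_pair_inverse:
  assumes "1 \<le> a" "a < n"
  shows "fsub (fmul (cliff_pair 1 (-1) a) (cliff_pair (1/2) (1/2) a)) (scal 1) \<in> Rideal n"
    and "fsub (fmul (cliff_pair (1/2) (1/2) a) (cliff_pair 1 (-1) a)) (scal 1) \<in> Rideal n"
proof -
  have fsub_comb: "fsub (comb xs) (comb ys) = comb (xs @ map (\<lambda>(c, u). (-c, u)) ys)" for xs ys
    unfolding fsub_def by (induction ys) (auto simp: comb_def fun_eq_iff)
  let ?r = "fadd (fadd (sandwich [(-1/2, [C a])] (comb [(1, [C a, C (a + 1)]), (1, [C (a + 1), C a])]) [(1, [C (a + 1)])])
                       (sandwich [(1/2, [])] (comb [(1, [C a, C a]), (1, [])]) [(1, [C (a + 1), C (a + 1)])]))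
                 (sandwich [(-1/2, [])] (comb [(1, [C (a + 1), C (a + 1)]), (1, [])]) [(1, [])])"
  have "?r \<in> Rideal n"
    using assms by (intro Rideal.add sandwich_in_Rideal rel_C_anticomm rel_C_square comb_in_FA)
      (auto simp: Cv_def)
  moreover have "fsub (fmul (cliff_pair 1 (-1) a) (cliff_pair (1/2) (1/2) a)) (scal 1) = ?r"
    and "fsub (fmul (cliff_pair (1/2) (1/2) a) (cliff_pair 1 (-1) a)) (scal 1) = ?r"
    unfolding cliff_pair_def scal_def
    by (simp_all only: comb_normalize fsub_comb, (intro comb_eqI, simp add: comb_def)+)
  ultimately show "fsub (fmul (cliff_pair 1 (-1) a) (cliff_pair (1/2) (1/2) a)) (scal 1) \<in> Rideal n"
    and "fsub (fmul (cliff_pair (1/2) (1/2) a) (cliff_pair 1 (-1) a)) (scal 1) \<in> Rideal n"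
    by simp_all
qed

lemma cliff_pair_in_FA: "1 \<le> a \<Longrightarrow> a < n \<Longrightarrow> cliff_pair \<alpha> \<beta> a \<in> FA n"
  unfolding cliff_pair_def by (intro comb_in_FA) (auto simp: Cv_def)

lemma homog_even_cliff_pair: "homog_even (cliff_pair \<alpha> \<beta> a)"
  unfolding homog_even_def cliff_pair_def by (auto dest!: comb_support simp: nC_def)

lemma right_mult_iso_remove_descent:
  assumes a: "1 \<le> a" "a < n" and D: "a \<in> D" "a + 1 \<notin> D" "a = 1 \<or> a - 1 \<in> D"
  shows "right_mult_iso n D (D - {a}) (cliff_pair 1 (-1) a) (cliff_pair (1/2) (1/2) a)"
proof -
  have des_gen_other: "des_gen (D - {a}) j = des_gen D j" if "j \<noteq> a" for j
    using that by (simp add: des_gen_def)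
  have j_pred: "j \<in> D" if "Tv n j" "j + 1 = a" for j
    using that D(3) by (auto simp: Tv_def)
  have gen_u: "fmul (des_gen D j) (cliff_pair 1 (-1) a) \<in> kerM n (D - {a})" if j: "Tv n j" for j
  proof (cases "j = a")
    case False
    then show ?thesis
      using a j D(2) j_pred[OF j] des_gen_cliff_pair_commute[of a n j "D - {a}"]
      by (simp add: des_gen_other)
  qed (use a D(1) des_gen_cliff_pair_remove in simp)
  have gen_w: "fmul (des_gen (D - {a}) j) (cliff_pair (1/2) (1/2) a) \<in> kerM n D" if j: "Tv n j" for j
  proof (cases "j = a")
    case False
    then show ?thesis
      using a j D(2) j_pred[OF j] des_gen_cliff_pair_commute[of a n j D]
      by (simp add: des_gen_other)
  qed (use a D(1) des_gen_cliff_pair_insert in simp)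
  show ?thesis
    using a kerM_right_mult[OF cliff_pair_in_FA[OF a] gen_u] kerM_right_mult[OF cliff_pair_in_FA[OF a] gen_w]
    unfolding right_mult_iso_def by (simp add: cliff_pair_in_FA homog_even_cliff_pair cliff_pair_inverse)
qed

definition peaks :: "nat set \<Rightarrow> nat set" where
  "peaks D = {a \<in> D. a \<noteq> 1 \<and> a - 1 \<notin> D}"

lemma HP_eq_peaks: "HP I = peaks (Des I)"
  by (simp add: HP_def peaks_def)

lemma peaks_remove_descent:
  assumes "1 \<le> a" "a + 1 \<notin> D" "a \<notin> peaks D"
  shows "peaks (D - {a}) = peaks D"
proof -
  have "x - 1 \<noteq> a" if "x \<in> D" for x
    using that assms(1,2) by (cases x) auto
  then show ?thesis
    using assms(3) unfolding peaks_def by auto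
qed

lemma right_mult_iso_peaks:
  assumes "finite D" "D \<subseteq> {1..<n}"
  shows "\<exists>u w. right_mult_iso n D (peaks D) u w"
  using assms
proof (induction "card D" arbitrary: D rule: less_induct)
  case less
  show ?case
  proof (cases "peaks D = D")
    case True
    then show ?thesis using right_mult_iso_refl by metis
  next
    case False
    define a where "a = Max (D - peaks D)"
    have "D - peaks D \<noteq> {}" "finite (D - peaks D)"
      using False less.prems by (auto simp: peaks_def)
    then have a: "a \<in> D" "a \<notin> peaks D" and a_max: "\<And>b. b \<in> D - peaks D \<Longrightarrow> b \<le> a"
      unfolding a_def using Max_in Max_ge by blast+
    have "a + 1 \<notin> D"
      using a_max[of "a + 1"] a by (force simp: peaks_def)
    moreover have "1 \<le> a" "a < n" "a = 1 \<or> a - 1 \<in> D"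
      using a less.prems by (auto simp: peaks_def)
    ultimately have "right_mult_iso n D (D - {a}) (cliff_pair 1 (-1) a) (cliff_pair (1/2) (1/2) a)"
      and "peaks (D - {a}) = peaks D"
      using a by (simp_all add: right_mult_iso_remove_descent peaks_remove_descent)
    moreover have "\<exists>u w. right_mult_iso n (D - {a}) (peaks (D - {a})) u w"
      using less.prems card_Diff1_less[OF less.prems(1) a(1)] by (intro less.hyps) auto
    ultimately show ?thesis
      by (metis right_mult_iso_trans)
  qed
qed

lemma Des_subset:
  assumes "composition n I"
  shows "Des I \<subseteq> {1..<n}"
proof
  fix x
  assume "x \<in> Des I"
  then obtain k where k: "x = sum_list (take k I)" "0 < k" "k < length I"
    unfolding Des_def by auto
  have pos: "0 < sum_list xs" if "xs \<noteq> []" "set xs \<subseteq> set I" for xs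
    using that assms by (cases xs) (auto simp: composition_def)
  have "sum_list (take k I) + sum_list (drop k I) = n"
    using assms unfolding composition_def by (metis append_take_drop_id sum_list_append)
  moreover have "0 < sum_list (take k I)" "0 < sum_list (drop k I)"
    using k by (auto intro!: pos dest: in_set_takeD in_set_dropD)
  ultimately show "x \<in> {1..<n}"
    using k(1) by auto
qed

lemma super_iso_if_HP_eq:
  assumes "composition n I" "composition n J" "HP I = HP J"
  shows "super_iso n I J"
proof -
  obtain u w where "right_mult_iso n (Des I) (peaks (Des I)) u w"
    using right_mult_iso_peaks Des_subset[OF assms(1)] by (meson finite_atLeastLessThan finite_subset)
  moreover obtain u' w' where "right_mult_iso n (Des J) (peaks (Des J)) u' w'"
    using right_mult_iso_peaks Des_subset[OF assms(2)] by (meson finite_atLeastLessThan finite_subset)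
  ultimately show ?thesis
    using assms(3) unfolding HP_eq_peaks
    by (metis right_mult_iso_sym right_mult_iso_trans super_iso_if_right_mult_iso)
qed

section \<open>A model of \<open>M\<close>\<close>

text \<open>A vector \<open>f\<close> stands for \<open>\<Sum>\<^sub>X f X \<cdot> c\<^sub>X \<epsilon>\<close>. Then \<open>c\<^sub>j\<close> toggles \<open>j \<in> X\<close> with the sign
  \<open>(-1)\<^bsup>#{d \<in> X. d < j}\<^esup>\<close>, and \<open>T\<^sub>i\<close>, with \<open>T\<^sub>i \<epsilon> = l \<epsilon>\<close>, only changes the membership of \<open>i\<close> and
  \<open>i + 1\<close>. The defining relations hold on all functions of sets, so no support condition is
  needed.\<close>

type_synonym vec = "nat set \<Rightarrow> complex"

definition assign :: "nat set \<Rightarrow> nat \<Rightarrow> bool \<Rightarrow> nat set" where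
  "assign X k b = (if b then insert k X else X - {k})"

lemma mem_assign [simp]: "x \<in> assign X k b \<longleftrightarrow> (if x = k then b else x \<in> X)"
  by (auto simp: assign_def)

lemma assign_assign_same [simp]: "assign (assign X k b) k b' = assign X k b'"
  by (auto simp: assign_def)

lemma assign_commute: "k \<noteq> k' \<Longrightarrow> assign (assign X k b) k' b' = assign (assign X k' b') k b"
  by (auto simp: assign_def)

lemma assign_triv [simp]: "(k \<in> X) = b \<Longrightarrow> assign X k b = X"
  by (auto simp: assign_def)

definition sign_below :: "nat \<Rightarrow> nat set \<Rightarrow> complex" where
  "sign_below j X = (-1) ^ card {d \<in> X. d < j}"

lemma sign_below_insert: "k < j \<Longrightarrow> k \<notin> Y \<Longrightarrow> sign_below j (insert k Y) = - sign_below j Y"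
proof -
  assume "k < j" "k \<notin> Y"
  then have "{d \<in> insert k Y. d < j} = insert k {d \<in> Y. d < j}" "k \<notin> {d \<in> Y. d < j}"
    by auto
  moreover have "finite {d \<in> Y. d < j}"
    by (rule finite_subset[of _ "{..<j}"]) auto
  ultimately show ?thesis
    by (simp add: sign_below_def)
qed

lemma sign_below_assign [simp]:
  "sign_below j (assign X k b) = (if k < j \<and> (k \<in> X) \<noteq> b then - sign_below j X else sign_below j X)"
proof (cases "k < j \<and> (k \<in> X) \<noteq> b")
  case True
  then show ?thesis
    using sign_below_insert[of k j X] sign_below_insert[of k j "X - {k}"]
    by (cases b) (auto simp: assign_def insert_absorb)
next
  case False
  then have "{d \<in> assign X k b. d < j} = {d \<in> X. d < j}"
    by (auto simp: assign_def)
  with False show ?thesis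
    by (simp add: sign_below_def)
qed

lemma sign_below_Suc: "sign_below (Suc j) X = (if j \<in> X then - sign_below j X else sign_below j X)"
proof -
  have "{d \<in> X. d < Suc j} = (if j \<in> X then insert j {d \<in> X. d < j} else {d \<in> X. d < j})"
    by (auto simp: less_Suc_eq)
  moreover have "finite {d \<in> X. d < j}"
    by (rule finite_subset[of _ "{..<j}"]) auto
  ultimately show ?thesis
    by (simp add: sign_below_def)
qed

lemma sign_below_square [simp]: "sign_below j X * sign_below j X = 1"
  by (simp add: sign_below_def flip: power_add mult_2)

definition T_act :: "complex \<Rightarrow> nat \<Rightarrow> vec \<Rightarrow> vec" where
  "T_act l i f X =
    (if i \<in> X then
       (if Suc i \<in> X then - (l + 1) * f X else (l + 1) * f (assign (assign X i False) (Suc i) True))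
     else
       (if Suc i \<in> X then l * f (assign (assign X (Suc i) False) i True) - f X
        else l * f X + f (assign (assign X i True) (Suc i) True)))"

definition C_act :: "nat \<Rightarrow> vec \<Rightarrow> vec" where
  "C_act j f X =
    (if j \<in> X then sign_below j X * f (assign X j False) else - sign_below j X * f (assign X j True))"

lemma T_act_square: "l = 0 \<or> l = -1 \<Longrightarrow> T_act l i (T_act l i f) X = - T_act l i f X"
  by (auto simp: T_act_def assign_commute algebra_simps)

lemma T_act_commute: "Suc i < j \<Longrightarrow> T_act l i (T_act m j f) X = T_act m j (T_act l i f) X"
  by (auto simp: T_act_def assign_commute algebra_simps)

lemma T_act_braid: "l = 0 \<or> l = -1 \<Longrightarrow> m = 0 \<or> m = -1 \<Longrightarrow>
   T_act l i (T_act m (Suc i) (T_act l i f)) X = T_act m (Suc i) (T_act l i (T_act m (Suc i) f)) X"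
  by (auto simp: T_act_def assign_commute algebra_simps)

lemma C_act_square: "C_act j (C_act j f) X = - f X"
  by (auto simp: C_act_def)

lemma C_act_anticommute: "i \<noteq> j \<Longrightarrow> C_act i (C_act j f) X = - C_act j (C_act i f) X"
  by (auto simp: C_act_def assign_commute)

lemma T_act_C_act_commute: "j \<noteq> i \<Longrightarrow> j \<noteq> Suc i \<Longrightarrow> T_act l i (C_act j f) X = C_act j (T_act l i f) X"
  by (auto simp: T_act_def C_act_def assign_commute algebra_simps)

lemma T_act_C_act: "T_act l i (C_act i f) X = C_act (Suc i) (T_act l i f) X"
  by (auto simp: T_act_def C_act_def assign_commute sign_below_Suc algebra_simps)

lemma T_act_C_act_Suc:
  "T_act l i (C_act (Suc i) f) X + C_act (Suc i) f X = C_act i (T_act l i f) X + C_act i f X"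
  by (auto simp: T_act_def C_act_def assign_commute sign_below_Suc algebra_simps)

definition eigen :: "nat set \<Rightarrow> nat \<Rightarrow> complex" where
  "eigen E i = (if i \<in> E then -1 else 0)"

lemma eigen_cases: "eigen E i = 0 \<or> eigen E i = -1"
  by (simp add: eigen_def)

fun gen_act :: "nat set \<Rightarrow> gen \<Rightarrow> vec \<Rightarrow> vec" where
  "gen_act E (T i) = T_act (eigen E i) i"
| "gen_act E (C j) = C_act j"

fun word_act :: "nat set \<Rightarrow> gen list \<Rightarrow> vec \<Rightarrow> vec" where
  "word_act E [] f = f"
| "word_act E (g # w) f = gen_act E g (word_act E w f)"

lemma word_act_append: "word_act E (u @ v) f = word_act E u (word_act E v f)"
  by (induction u) auto

lemma word_act_linear:
  "word_act E u (\<lambda>Y. c * f Y + h Y) = (\<lambda>X. c * word_act E u f X + word_act E u h X)"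
proof (induction u)
  case (Cons g u)
  then have "word_act E (g # u) (\<lambda>Y. c * f Y + h Y)
      = gen_act E g (\<lambda>X. c * word_act E u f X + word_act E u h X)"
    by simp
  then show ?case
    by (cases g) (auto simp: T_act_def C_act_def algebra_simps)
qed simp

lemma word_act_zero: "word_act E u (\<lambda>_. 0) = (\<lambda>_. 0)"
proof (induction u)
  case (Cons g u)
  then show ?case
    by (cases g) (simp_all add: T_act_def C_act_def fun_eq_iff)
qed simp

lemma word_act_sum_list:
  "word_act E u (\<lambda>Y. \<Sum>(d, v)\<leftarrow>ys. d * g v Y) = (\<lambda>X. \<Sum>(d, v)\<leftarrow>ys. d * word_act E u (g v) X)"
  by (induction ys) (auto simp: word_act_zero word_act_linear)

definition act :: "nat set \<Rightarrow> fa \<Rightarrow> vec \<Rightarrow> vec" where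
  "act E p f X = (\<Sum>w | p w \<noteq> 0. p w * word_act E w f X)"

lemma act_on_superset:
  "finite S \<Longrightarrow> {w. p w \<noteq> 0} \<subseteq> S \<Longrightarrow> act E p f X = (\<Sum>w\<in>S. p w * word_act E w f X)"
  unfolding act_def by (rule sum.mono_neutral_left) auto

lemma act_fadd:
  assumes "finite {w. p w \<noteq> 0}" "finite {w. q w \<noteq> 0}"
  shows "act E (fadd p q) f X = act E p f X + act E q f X"
proof -
  let ?S = "{w. p w \<noteq> 0} \<union> {w. q w \<noteq> 0}"
  have "act E r f X = (\<Sum>w\<in>?S. r w * word_act E w f X)" if "r \<in> {p, q, fadd p q}" for r
    using that assms by (intro act_on_superset) (auto simp: fadd_def)
  then show ?thesis
    by (simp add: fadd_def ring_distribs sum.distrib)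
qed

lemma act_zero_left [simp]: "act E (\<lambda>_. 0) f = (\<lambda>_. 0)"
  by (simp add: act_def fun_eq_iff)

lemma act_monom: "act E (monom c u) f X = c * word_act E u f X"
  by (subst act_on_superset[of "{u}"]) (auto simp: monom_def)

lemma act_comb: "act E (comb xs) f = (\<lambda>X. \<Sum>(c, u)\<leftarrow>xs. c * word_act E u f X)"
proof (induction xs)
  case Nil
  then show ?case by simp
next
  case (Cons x xs)
  moreover have "finite {w. monom c u w \<noteq> 0}" for c u
    by (rule finite_subset[of _ "{u}"]) (auto simp: monom_def)
  ultimately show ?case
    by (cases x) (simp add: comb_Cons act_fadd finite_comb_support act_monom fun_eq_iff)
qed

lemma act_fmul:
  assumes "finite {w. p w \<noteq> 0}" "finite {w. q w \<noteq> 0}"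
  shows "act E (fmul p q) f = act E p (act E q f)"
proof -
  have prefix: "(\<Sum>(c, u)\<leftarrow>map (\<lambda>(d, v). (a * d, b @ v)) ys. c * word_act E u f X)
      = a * (\<Sum>(d, v)\<leftarrow>ys. d * word_act E b (word_act E v f) X)" for a b ys X
    by (induction ys) (auto simp: word_act_append algebra_simps)
  have "act E (comb (comb_mult xs ys)) f = act E (comb xs) (act E (comb ys) f)" for xs ys
    by (induction xs) (auto simp: comb_mult_Cons act_comb word_act_sum_list prefix[simplified] fun_eq_iff)
  with assms show ?thesis
    by (elim comb_of_finite_support) (simp add: fmul_comb)
qed

lemma act_zero: "act E p (\<lambda>_. 0) = (\<lambda>_. 0)"
  by (simp add: act_def word_act_zero fun_eq_iff)

lemma act_one: "act E (scal 1) f = f"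
  by (simp add: scal_def act_comb)

lemma act_fsub:
  assumes "finite {w. p w \<noteq> 0}" "finite {w. q w \<noteq> 0}"
  shows "act E (fsub p q) f X = act E p f X - act E q f X"
proof -
  have "finite {w. fmul (scal (-1)) q w \<noteq> 0}"
    using assms(2) by (simp add: fmul_scal_left)
  then have "act E (fsub p q) f X = act E p f X + act E (scal (-1)) (act E q f) X"
    using assms finite_comb_support by (simp add: fsub_eq_fadd_neg act_fadd act_fmul scal_def)
  then show ?thesis
    by (simp add: scal_def act_comb)
qed

lemma rels_act: "r \<in> rels n \<Longrightarrow> act E r f X = 0"
proof -
  assume "r \<in> rels n"
  then consider
      i where "r = comb [(1, [T i, T i]), (1, [T i])]"
    | i j where "r = comb [(1, [T i, T j]), (-1, [T j, T i])]" "i + 1 < j \<or> j + 1 < i"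
    | i where "r = comb [(1, [T i, T (i + 1), T i]), (-1, [T (i + 1), T i, T (i + 1)])]"
    | i j where "r = comb [(1, [C i, C j]), (1, [C j, C i])]" "i \<noteq> j"
    | i where "r = comb [(1, [C i, C i]), (1, [])]"
    | i j where "r = comb [(1, [T i, C j]), (-1, [C j, T i])]" "j \<noteq> i" "j \<noteq> i + 1"
    | i where "r = comb [(1, [T i, C i]), (-1, [C (i + 1), T i])]"
    | i where "r = comb [(1, [T i, C (i + 1)]), (1, [C (i + 1)]), (-1, [C i, T i]), (-1, [C i])]"
    unfolding rels_def by blast
  then show ?thesis
  proof cases
    case (2 i j)
    then have "T_act (eigen E i) i (T_act (eigen E j) j f) = T_act (eigen E j) j (T_act (eigen E i) i f)"
      by (intro ext) (metis T_act_commute Suc_eq_plus1)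
    with 2 show ?thesis
      by (simp add: act_comb)
  next
    case (4 i j)
    then show ?thesis
      using C_act_anticommute[of i j f] by (simp add: act_comb)
  next
    case (8 i)
    then show ?thesis
      using T_act_C_act_Suc[of "eigen E i" i f] by (simp add: act_comb algebra_simps)
  qed (simp_all add: act_comb eigen_cases T_act_square T_act_braid C_act_square
      T_act_C_act_commute T_act_C_act)
qed

lemma Rideal_act: "x \<in> Rideal n \<Longrightarrow> act E x f X = 0"
proof (induction x arbitrary: f X rule: Rideal.induct)
  case (add x y)
  then show ?case
    by (simp add: act_fadd FA_finite_support[OF Rideal_subset_FA[OF add.hyps(1)]]
        FA_finite_support[OF Rideal_subset_FA[OF add.hyps(2)]])
next
  case (lmul a x)
  then have "act E x f = (\<lambda>_. 0)" for f
    by (simp add: fun_eq_iff)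
  then show ?case
    by (simp add: act_fmul FA_finite_support[OF lmul.hyps(1)]
        FA_finite_support[OF Rideal_subset_FA[OF lmul.hyps(2)]] act_zero)
next
  case (rmul a x)
  then show ?case
    by (simp add: act_fmul FA_finite_support[OF rmul.hyps(1)]
        FA_finite_support[OF Rideal_subset_FA[OF rmul.hyps(2)]])
qed (simp_all add: rels_act)

definition epsilon :: vec where
  "epsilon X = (if X = {} then 1 else 0)"

lemma act_des_gen: "act E (des_gen D j) f X = T_act (eigen E j) j f X + (if j \<in> D then 1 else 0) * f X"
  by (simp add: des_gen_def act_comb)

lemma kerM_act_epsilon: "x \<in> kerM n E \<Longrightarrow> act E x epsilon X = 0"
proof (induction x arbitrary: X rule: kerM.induct)
  case (gen j)
  then show ?case
    by (auto simp: act_des_gen T_act_def epsilon_def eigen_def assign_def)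
next
  case (add x y)
  then show ?case
    by (simp add: act_fadd FA_finite_support[OF kerM_subset_FA[OF add.hyps(1)]]
        FA_finite_support[OF kerM_subset_FA[OF add.hyps(2)]])
next
  case (lmul a x)
  then have "act E x epsilon = (\<lambda>_. 0)"
    by (simp add: fun_eq_iff)
  then show ?case
    by (simp add: act_fmul FA_finite_support[OF lmul.hyps(1)]
        FA_finite_support[OF kerM_subset_FA[OF lmul.hyps(2)]] act_zero)
qed (simp add: Rideal_act)

text \<open>On the span of the eight configurations of \<open>c\<^sub>i, c\<^sub>i\<^sub>+\<^sub>1, c\<^sub>i\<^sub>+\<^sub>2\<close> (with \<open>X\<close> fixed elsewhere),
  a vector killed by \<open>T\<^sub>i\<close> on which \<open>T\<^sub>i\<^sub>+\<^sub>1\<close> acts by \<open>-1\<close> exists only for the eigenvalues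
  \<open>(\<lambda>\<^sub>i, \<lambda>\<^sub>i\<^sub>+\<^sub>1) = (0, -1)\<close>, i.e. when \<open>i + 1\<close> is a peak.\<close>

lemma T_act_peak_vector_zero:
  assumes h1: "\<And>Y. T_act l1 i w Y = 0" and h2: "\<And>Y. T_act l2 (Suc i) w Y = - w Y"
    and l: "(l1, l2) \<in> {(0, 0), (-1, 0), (-1, -1)}"
  shows "w X = 0"
proof -
  define S where "S b1 b2 b3 = assign (assign (assign X i b1) (Suc i) b2) (Suc (Suc i)) b3" for b1 b2 b3
  define v where "v b1 b2 b3 = w (S b1 b2 b3)" for b1 b2 b3
  have A11: "-(l1 + 1) * v True True b = 0" for b
    using h1[of "S True True b"] by (simp add: T_act_def S_def v_def assign_commute)
  have A10: "(l1 + 1) * v False True b = 0" for b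
    using h1[of "S True False b"] by (simp add: T_act_def S_def v_def assign_commute)
  have A01: "l1 * v True False b - v False True b = 0" for b
    using h1[of "S False True b"] by (simp add: T_act_def S_def v_def assign_commute)
  have A00: "l1 * v False False b + v True True b = 0" for b
    using h1[of "S False False b"] by (simp add: T_act_def S_def v_def assign_commute)
  have B11: "-(l2 + 1) * v b True True = - v b True True" for b
    using h2[of "S b True True"] by (simp add: T_act_def S_def v_def assign_commute)
  have B10: "(l2 + 1) * v b False True = - v b True False" for b
    using h2[of "S b True False"] by (simp add: T_act_def S_def v_def assign_commute)
  have B01: "l2 * v b True False - v b False True = - v b False True" for b
    using h2[of "S b False True"] by (simp add: T_act_def S_def v_def assign_commute)
  have B00: "l2 * v b False False + v b True True = - v b False False" for b
    using h2[of "S b False False"] by (simp add: T_act_def S_def v_def assign_commute)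
  note eqs = A11[of False] A11[of True] A10[of False] A10[of True] A01[of False] A01[of True]
    A00[of False] A00[of True] B11[of False] B11[of True] B10[of False] B10[of True]
    B01[of False] B01[of True] B00[of False] B00[of True]
  have "v b1 b2 b3 = 0" for b1 b2 b3
  proof -
    have "v False False False = 0 \<and> v False False True = 0 \<and> v False True False = 0
      \<and> v False True True = 0 \<and> v True False False = 0 \<and> v True False True = 0
      \<and> v True True False = 0 \<and> v True True True = 0"
      using l eqs by (elim insertE emptyE; simp only: prod.inject; (intro conjI; algebra))
    then show ?thesis
      by (cases b1; cases b2; cases b3) auto
  qed
  moreover have "X = S (i \<in> X) (Suc i \<in> X) (Suc (Suc i) \<in> X)"
    by (simp add: S_def)
  ultimately show ?thesis
    by (metis v_def)
qed

section \<open>Peak sets are invariants\<close>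

lemma act_epsilon_des_gen:
  assumes v: "v \<in> FA n" and intertwines: "\<And>j. Tv n j \<Longrightarrow> fmul (des_gen D j) v \<in> kerM n E"
    and j: "Tv n j"
  shows "T_act (eigen E j) j (act E v epsilon) Y + (if j \<in> D then 1 else 0) * act E v epsilon Y = 0"
proof -
  have "act E (fmul (des_gen D j) v) epsilon Y = 0"
    using intertwines[OF j] by (rule kerM_act_epsilon)
  moreover have "act E (fmul (des_gen D j) v) epsilon = act E (des_gen D j) (act E v epsilon)"
    using finite_comb_support FA_finite_support[OF v] by (simp add: act_fmul des_gen_def)
  ultimately show ?thesis
    by (simp add: act_des_gen)
qed

lemma no_generating_intertwiner_across_peak:
  assumes v: "v \<in> FA n" and y: "y \<in> FA n"
    and intertwines: "\<And>j. Tv n j \<Longrightarrow> fmul (des_gen D j) v \<in> kerM n E"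
    and generates: "fsub (fmul y v) (scal 1) \<in> kerM n E"
    and a: "a \<in> peaks D" "a \<notin> peaks E" and D: "D \<subseteq> {1..<n}"
  shows False
proof -
  define W where "W = act E v epsilon"
  have W_eigen: "T_act (eigen E j) j W Y + (if j \<in> D then 1 else 0) * W Y = 0" if "Tv n j" for j Y
    unfolding W_def using v intertwines that by (rule act_epsilon_des_gen)
  have aD: "a \<in> D" "a \<noteq> 1" "a - 1 \<notin> D" "a \<notin> E \<or> a - 1 \<in> E"
    using a by (auto simp: peaks_def)
  moreover have "a \<in> {1..<n}"
    using D aD(1) by blast
  ultimately have j: "Tv n (a - 1)" "Tv n a" and Suc_pred: "Suc (a - 1) = a"
    by (auto simp: Tv_def)
  then have "T_act (eigen E (a - 1)) (a - 1) W Y = 0" "T_act (eigen E (Suc (a - 1))) (Suc (a - 1)) W Y = - W Y"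
    and "(eigen E (a - 1), eigen E (Suc (a - 1))) \<in> {(0, 0), (-1, 0), (-1, -1)}" for Y
    using W_eigen[OF j(1), of Y] W_eigen[OF j(2), of Y] aD by (auto simp: eigen_def add_eq_0_iff)
  then have "W = (\<lambda>_. 0)"
    by (blast intro: T_act_peak_vector_zero)
  moreover have "act E (fmul y v) epsilon X - epsilon X = 0" for X
    using kerM_act_epsilon[OF generates, of X] FA_finite_support fmul_in_FA[OF y v] scal_in_FA
    by (simp add: act_fsub act_one)
  ultimately have "epsilon X = 0" for X
    unfolding W_def using FA_finite_support[OF y] FA_finite_support[OF v]
    by (simp add: act_fmul act_zero)
  then show False
    using epsilon_def by (metis one_neq_zero)
qed

lemma kerM_cancel:
  assumes additive: "\<And>x y. x \<in> FA n \<Longrightarrow> y \<in> FA n \<Longrightarrow> fsub (\<phi> (fadd x y)) (fadd (\<phi> x) (\<phi> y)) \<in> kerM n E"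
    and injective: "\<And>x. x \<in> FA n \<Longrightarrow> \<phi> x \<in> kerM n E \<Longrightarrow> x \<in> kerM n D"
    and FA: "x \<in> FA n" "x' \<in> FA n" and "fsub (\<phi> x) (\<phi> x') \<in> kerM n E"
  shows "fsub x x' \<in> kerM n D"
proof (rule injective)
  let ?d = "fsub x x'"
  show d: "?d \<in> FA n"
    using FA by (rule fsub_in_FA)
  have "fadd ?d x' = x"
    by (auto simp: fsub_def fadd_def)
  then have sum: "fsub (\<phi> x) (fadd (\<phi> ?d) (\<phi> x')) \<in> kerM n E"
    using additive[OF d FA(2)] by simp
  have "\<phi> ?d = fsub (fsub (\<phi> x) (\<phi> x')) (fsub (\<phi> x) (fadd (\<phi> ?d) (\<phi> x')))"
    by (auto simp: fsub_def fadd_def)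
  also have "\<dots> \<in> kerM n E"
    using assms(5) sum by (rule fsub_in_kerM)
  finally show "\<phi> ?d \<in> kerM n E" .
qed

lemma super_iso_intertwiners:
  assumes "super_iso n I J"
  obtains v y where "v \<in> FA n" "y \<in> FA n"
    "\<And>j. Tv n j \<Longrightarrow> fmul (des_gen (Des I) j) v \<in> kerM n (Des J)"
    "\<And>j. Tv n j \<Longrightarrow> fmul (des_gen (Des J) j) y \<in> kerM n (Des I)"
    "fsub (fmul y v) (scal 1) \<in> kerM n (Des J)"
    "fsub (fmul v y) (scal 1) \<in> kerM n (Des I)"
proof -
  let ?D = "Des I" and ?E = "Des J"
  obtain \<phi> where FA: "\<forall>x\<in>FA n. \<phi> x \<in> FA n"
    and welldef: "\<forall>x\<in>FA n. \<forall>y\<in>FA n. fsub x y \<in> kerM n ?D \<longrightarrow> fsub (\<phi> x) (\<phi> y) \<in> kerM n ?E"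
    and additive: "\<forall>x\<in>FA n. \<forall>y\<in>FA n. fsub (\<phi> (fadd x y)) (fadd (\<phi> x) (\<phi> y)) \<in> kerM n ?E"
    and linear: "\<forall>a\<in>FA n. \<forall>x\<in>FA n. fsub (\<phi> (fmul a x)) (fmul a (\<phi> x)) \<in> kerM n ?E"
    and injective: "\<forall>x\<in>FA n. \<phi> x \<in> kerM n ?E \<longrightarrow> x \<in> kerM n ?D"
    and surjective: "\<forall>y\<in>FA n. \<exists>x\<in>FA n. fsub (\<phi> x) y \<in> kerM n ?E"
    using assms unfolding super_iso_def NI_eq_kerM by blast
  define v where "v = \<phi> (scal 1)"
  obtain y where y: "y \<in> FA n" "fsub (\<phi> y) (scal 1) \<in> kerM n ?E"
    using surjective scal_in_FA by blast
  have v: "v \<in> FA n"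
    unfolding v_def using FA scal_in_FA by blast
  have \<phi>_mult: "fsub (\<phi> x) (fmul x v) \<in> kerM n ?E" if "x \<in> FA n" for x
    using linear[rule_format, OF that scal_in_FA[of 1]] by (simp add: v_def)
  have \<phi>_kernel: "\<phi> x \<in> kerM n ?E" if "x \<in> kerM n ?D" for x
  proof -
    have "\<phi> (\<lambda>_. 0) \<in> kerM n ?E"
      using \<phi>_mult[OF zero_in_FA] by simp
    then show ?thesis
      using welldef[rule_format, OF kerM_subset_FA[OF that] zero_in_FA] that by (simp add: kerM_fsub_mem)
  qed
  show thesis
  proof (rule that[OF v y(1)])
    show "fmul (des_gen ?D j) v \<in> kerM n ?E" if "Tv n j" for j
      using \<phi>_mult \<phi>_kernel kerM.gen[OF that] kerM_subset_FA
      by (meson kerM_fsub_mem kerM_sym)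
    show "fmul (des_gen ?E j) y \<in> kerM n ?D" if j: "Tv n j" for j
    proof (rule injective[rule_format])
      have g: "des_gen ?E j \<in> FA n" "des_gen ?E j \<in> kerM n ?E"
        using kerM.gen[OF j] kerM_subset_FA by blast+
      show "fmul (des_gen ?E j) y \<in> FA n"
        using g y by (simp add: fmul_in_FA)
      have "fsub (fmul (des_gen ?E j) (\<phi> y)) (des_gen ?E j) \<in> kerM n ?E"
        using kerM.lmul[OF g(1) y(2)] by (simp add: fmul_fsub_right)
      then show "\<phi> (fmul (des_gen ?E j) y) \<in> kerM n ?E"
        using linear[rule_format, OF g(1) y(1)] g(2) by (meson kerM_fsub_mem kerM_trans)
    qed
    show "fsub (fmul y v) (scal 1) \<in> kerM n ?E"
      using \<phi>_mult[OF y(1)] y(2) by (meson kerM_sym kerM_trans)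
    have "fsub (fmul v (\<phi> y)) v \<in> kerM n ?E"
      using kerM.lmul[OF v y(2)] by (simp add: fmul_fsub_right)
    then have "fsub (\<phi> (fmul v y)) (\<phi> (scal 1)) \<in> kerM n ?E"
      using linear[rule_format, OF v y(1)] unfolding v_def by (meson kerM_trans)
    from kerM_cancel[OF _ _ fmul_in_FA[OF v y(1)] scal_in_FA this]
    show "fsub (fmul v y) (scal 1) \<in> kerM n ?D"
      using additive injective by blast
  qed
qed

lemma HP_eq_if_super_iso:
  assumes "composition n I" "composition n J" "super_iso n I J"
  shows "HP I = HP J"
proof (rule ccontr)
  assume "HP I \<noteq> HP J"
  then obtain a where "a \<in> peaks (Des I) - peaks (Des J) \<or> a \<in> peaks (Des J) - peaks (Des I)"
    unfolding HP_eq_peaks by blast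
  moreover obtain v y where "v \<in> FA n" "y \<in> FA n"
    "\<And>j. Tv n j \<Longrightarrow> fmul (des_gen (Des I) j) v \<in> kerM n (Des J)"
    "\<And>j. Tv n j \<Longrightarrow> fmul (des_gen (Des J) j) y \<in> kerM n (Des I)"
    "fsub (fmul y v) (scal 1) \<in> kerM n (Des J)" "fsub (fmul v y) (scal 1) \<in> kerM n (Des I)"
    using super_iso_intertwiners[OF assms(3)] by blast
  ultimately show False
    using Des_subset assms(1,2) no_generating_intertwiner_across_peak by blast
qed

theorem mainTheorem11:
  fixes n :: nat and I J :: "nat list"
  assumes "composition n I" and "composition n J"
  shows "super_iso n I J \<longleftrightarrow> HP I = HP J"
  using assms HP_eq_if_super_iso super_iso_if_HP_eq by blast

end
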